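(* Let $q\ge1$. Let $0=s_0<s_1<\dots<s_q=1$ be nodes and $\{\lambda_n^{[q]}\}_{n=0}^q$ the corresponding Lagrange basis of $\mathcal{P}^q([0,1])$, and let $\{\lambda_m^{[q-1]}\}_{m=0}^{q-1}$ be the Lagrange basis of $\mathcal{P}^{q-1}([0,1])$ with respect to some set of $q$ distinct nodes in $[0,1]$. Define $a_{mn}=\int_0^1\dot\lambda_n^{[q]}(t)\lambda_{m-1}^{[q-1]}(t)\,dt$ for $m=1,\dots,q$, $n=0,\dots,q$, let $A=(a_{mn})_{m,n=1}^q$ (which is invertible) and $\bar A=(\bar a_{mn})=A^{-1}$. Then for every $m=1,\dots,q$, $$\sum_{n=1}^q\bar a_{mn}a_{n0}=-1.$$
   Context: $\mathcal{P}^q([0,1])$ is the space of polynomials of degree $\le q$ on $[0,1]$; the Lagrange basis for nodes $s_0,\dots,s_q$ is $\lambda_n(s)=\prod_{l\ne n}(s-s_l)/(s_n-s_l)$. *)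

theory Defs
  imports "HOL-Analysis.Analysis" "Jordan_Normal_Form.Matrix"
begin

definition lagrange_basis :: "(nat \<Rightarrow> real) \<Rightarrow> nat \<Rightarrow> nat \<Rightarrow> real \<Rightarrow> real" where
  "lagrange_basis s d n t = (\<Prod>l\<in>{0..d} - {n}. (t - s l) / (s n - s l))"

definition coef_a :: "(nat \<Rightarrow> real) \<Rightarrow> (nat \<Rightarrow> real) \<Rightarrow> nat \<Rightarrow> nat \<Rightarrow> nat \<Rightarrow> real" where
  "coef_a s r q m n = integral {0..1}
     (\<lambda>t. deriv (lagrange_basis s q n) t * lagrange_basis r (q - 1) (m - 1) t)"

definition mat_A :: "(nat \<Rightarrow> real) \<Rightarrow> (nat \<Rightarrow> real) \<Rightarrow> nat \<Rightarrow> real mat" where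
  "mat_A s r q = mat q q (\<lambda>(i, j). coef_a s r q (i + 1) (j + 1))"

end

theory Submission
  imports Defs "Jordan_Normal_Form.Determinant" "HOL-Computational_Algebra.Polynomial"
begin

text \<open>The Lagrange basis sums to the constant 1, so for each row m the entries a_{m0}, ..., a_{mq}
  are integrals against the derivative of 1 and add up to 0: the column (a_{n0})_n is minus the
  vector of row sums of A, and multiplying by A^{-1} gives -1 in every entry. A is invertible
  because a kernel vector v gives a polynomial P' = \<Sum> v_n (\<lambda>_n^[q])' of degree at most q-1
  orthogonal to the whole of \<P>^{q-1}, hence to itself; so P' = 0, the combination
  \<Sum> v_n \<lambda>_n^[q] is constant, and as it vanishes at s_0 all v_n are 0.\<close>

definition lagrange_poly :: "(nat \<Rightarrow> real) \<Rightarrow> nat \<Rightarrow> nat \<Rightarrow> real poly" where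
  "lagrange_poly s d n = (\<Prod>l\<in>{0..d} - {n}. [: - s l / (s n - s l), 1 / (s n - s l) :])"

lemma lagrange_basis_eq_poly: "lagrange_basis s d n = poly (lagrange_poly s d n)"
  unfolding lagrange_basis_def lagrange_poly_def
  by (auto simp: poly_prod diff_divide_distrib intro!: prod.cong)

lemma degree_lagrange_poly:
  assumes "n \<le> d"
  shows "degree (lagrange_poly s d n) \<le> d"
proof -
  have "degree (lagrange_poly s d n)
      \<le> (\<Sum>l\<in>{0..d} - {n}. degree [: - s l / (s n - s l), 1 / (s n - s l) :])"
    unfolding lagrange_poly_def by (rule order.trans[OF degree_prod_sum_le]) auto
  also have "\<dots> \<le> (\<Sum>l\<in>{0..d} - {n}. 1)"
    by (intro sum_mono) auto
  also have "\<dots> = d"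
    using assms by simp
  finally show ?thesis .
qed

lemma poly_lagrange_poly_node:
  assumes "inj_on s {0..d}" and "n \<le> d" and "k \<le> d"
  shows "poly (lagrange_poly s d n) (s k) = (if k = n then 1 else 0)"
proof (cases "k = n")
  case True
  have "s n \<noteq> s l" if "l \<in> {0..d} - {n}" for l
    using assms that by (auto dest: inj_onD)
  with True show ?thesis
    unfolding lagrange_basis_eq_poly[symmetric] lagrange_basis_def by (auto intro!: prod.neutral)
next
  case False
  with assms show ?thesis
    unfolding lagrange_basis_eq_poly[symmetric] lagrange_basis_def by (auto intro!: prod_zero bexI[of _ k])
qed

lemma poly_lagrange_combination_node:
  assumes "inj_on s {0..d}" and "k \<le> d"
  shows "poly (\<Sum>n\<in>{0..d}. Polynomial.smult (c n) (lagrange_poly s d n)) (s k) = c k"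
  using assms by (simp add: poly_sum poly_lagrange_poly_node if_distrib[of "\<lambda>x. _ * x"] cong: if_cong)

lemma lagrange_interpolation:
  assumes inj: "inj_on s {0..d}" and deg: "degree f \<le> d"
  shows "f = (\<Sum>n\<in>{0..d}. Polynomial.smult (poly f (s n)) (lagrange_poly s d n))"
proof (rule poly_eqI_degree[where A = "s ` {0..d}"])
  have card: "card (s ` {0..d}) = Suc d"
    using inj by (simp add: card_image)
  show "degree f < card (s ` {0..d})"
    using card deg by simp
  have "degree (\<Sum>n\<in>{0..d}. Polynomial.smult (poly f (s n)) (lagrange_poly s d n)) \<le> d"
    by (intro degree_sum_le) (auto intro: order.trans[OF degree_smult_le] degree_lagrange_poly)
  then show "degree (\<Sum>n\<in>{0..d}. Polynomial.smult (poly f (s n)) (lagrange_poly s d n)) < card (s ` {0..d})"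
    using card by simp
next
  fix x assume "x \<in> s ` {0..d}"
  then show "poly f x = poly (\<Sum>n\<in>{0..d}. Polynomial.smult (poly f (s n)) (lagrange_poly s d n)) x"
    using poly_lagrange_combination_node[OF inj, of _ "\<lambda>n. poly f (s n)"] by auto
qed

lemma sum_lagrange_poly:
  assumes "inj_on s {0..d}"
  shows "(\<Sum>n\<in>{0..d}. lagrange_poly s d n) = 1"
  using lagrange_interpolation[OF assms, of 1] by simp

lemma inj_on_if_Suc_less:
  fixes s :: "nat \<Rightarrow> 'a::linorder"
  assumes "\<And>i. i < q \<Longrightarrow> s i < s (Suc i)"
  shows "inj_on s {0..q}"
proof (rule strict_mono_on_imp_inj_on, rule strict_mono_onI)
  fix i j assume "i \<in> {0..q}" "j \<in> {0..q}" "i < j"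
  then have "Suc i \<le> j" "j \<le> q" by auto
  then show "s i < s j"
  proof (induction j rule: dec_induct)
    case (step n)
    then show ?case using assms[of n] by auto
  qed (use assms in auto)
qed

lemma poly_eq_0_if_integral_square_eq_0:
  fixes p :: "real poly"
  assumes "a < b" and "integral {a..b} (\<lambda>t. poly p t * poly p t) = 0"
  shows "p = 0"
proof (rule ccontr)
  assume "p \<noteq> 0"
  have "continuous_on {a..b} (\<lambda>t. poly p t * poly p t)"
    by (intro continuous_intros)
  with assms have "\<forall>t\<in>{a..b}. poly p t * poly p t = 0"
    by (subst integral_eq_0_iff[symmetric]) auto
  then have "{a..b} \<subseteq> {t. poly p t = 0}"
    by auto
  with poly_roots_finite[OF \<open>p \<noteq> 0\<close>] have "finite {a..b}"
    by (rule rev_finite_subset)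
  with \<open>a < b\<close> show False
    using infinite_Icc by blast
qed

text \<open>By interpolation p lies in the span of the basis, so it is orthogonal to itself.\<close>
lemma poly_eq_0_if_orthogonal_lagrange:
  fixes p :: "real poly"
  assumes inj: "inj_on r {0..d}" and deg: "degree p \<le> d" and "a < b"
    and orth: "\<And>i. i \<le> d \<Longrightarrow> integral {a..b} (\<lambda>t. poly p t * poly (lagrange_poly r d i) t) = 0"
  shows "p = 0"
proof (rule poly_eq_0_if_integral_square_eq_0[OF \<open>a < b\<close>])
  have "(\<lambda>t. poly p t * poly p t)
      = (\<lambda>t. \<Sum>i\<in>{0..d}. poly p (r i) * (poly p t * poly (lagrange_poly r d i) t))"
    by (subst (2) lagrange_interpolation[OF inj deg])
      (simp add: poly_sum sum_distrib_left mult.left_commute)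
  then have "integral {a..b} (\<lambda>t. poly p t * poly p t)
      = (\<Sum>i\<in>{0..d}. poly p (r i) * integral {a..b} (\<lambda>t. poly p t * poly (lagrange_poly r d i) t))"
    by (simp add: integral_sum integrable_continuous_interval continuous_intros)
  also have "\<dots> = 0"
    using orth by simp
  finally show "integral {a..b} (\<lambda>t. poly p t * poly p t) = 0" .
qed

lemma pderiv_sum: "pderiv (sum f A) = (\<Sum>x\<in>A. pderiv (f x))"
  using higher_pderiv_sum[of 1] by simp

lemma coef_a_eq_integral_poly:
  "coef_a s r q m n = integral {0..1}
     (\<lambda>t. poly (pderiv (lagrange_poly s q n)) t * poly (lagrange_poly r (q - 1) (m - 1)) t)"
  unfolding coef_a_def lagrange_basis_eq_poly by (simp add: DERIV_imp_deriv[OF poly_DERIV])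

lemma coef_a_row_sum:
  assumes "inj_on s {0..q}"
  shows "(\<Sum>n\<in>{0..q}. coef_a s r q m n) = 0"
proof -
  have "(\<Sum>n\<in>{0..q}. coef_a s r q m n) = integral {0..1} (\<lambda>t.
      poly (pderiv (\<Sum>n\<in>{0..q}. lagrange_poly s q n)) t * poly (lagrange_poly r (q - 1) (m - 1)) t)"
    by (simp add: coef_a_eq_integral_poly integral_sum[symmetric] integrable_continuous_interval
        continuous_intros pderiv_sum poly_sum sum_distrib_right)
  then show ?thesis
    by (simp add: sum_lagrange_poly[OF assms])
qed

lemma coef_a_first_column:
  assumes "inj_on s {0..q}"
  shows "coef_a s r q m 0 = - (\<Sum>k<q. coef_a s r q m (Suc k))"
  using coef_a_row_sum[OF assms, of r m]
  by (simp add: sum.atLeast_Suc_atMost[of 0 q] sum.atLeast1_atMost_eq)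

lemma mat_A_entry: "i < q \<Longrightarrow> j < q \<Longrightarrow> mat_A s r q $$ (i, j) = coef_a s r q (Suc i) (Suc j)"
  by (simp add: mat_A_def)

lemma mat_A_kernel_trivial:
  assumes inj_s: "inj_on s {0..q}" and inj_r: "inj_on r {0..q - 1}" and "q \<ge> 1"
    and v: "v \<in> carrier_vec q" and kernel: "mat_A s r q *\<^sub>v v = 0\<^sub>v q"
  shows "v = 0\<^sub>v q"
proof -
  define c where "c n = (if n = 0 then 0 else v $ (n - 1))" for n
  define p where "p = (\<Sum>n\<in>{0..q}. Polynomial.smult (c n) (lagrange_poly s q n))"
  have orth: "integral {0..1} (\<lambda>t. poly (pderiv p) t * poly (lagrange_poly r (q - 1) i) t) = 0"
    if "i \<le> q - 1" for i
  proof -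
    have "integral {0..1} (\<lambda>t. poly (pderiv p) t * poly (lagrange_poly r (q - 1) i) t)
        = (\<Sum>n\<in>{0..q}. c n * coef_a s r q (Suc i) n)"
      by (simp add: p_def coef_a_eq_integral_poly pderiv_sum pderiv_smult poly_sum sum_distrib_right
          mult.assoc integral_sum integrable_continuous_interval continuous_intros)
    also have "\<dots> = (\<Sum>j<q. mat_A s r q $$ (i, j) * v $ j)"
      using that \<open>q \<ge> 1\<close>
      by (simp add: sum.atLeast_Suc_atMost[of 0 q] sum.atLeast1_atMost_eq c_def mat_A_entry mult.commute)
    also have "\<dots> = (mat_A s r q *\<^sub>v v) $ i"
      using that \<open>q \<ge> 1\<close> v by (auto simp: mat_A_def scalar_prod_def lessThan_atLeast0)
    finally show ?thesis
      using kernel that \<open>q \<ge> 1\<close> by simp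
  qed
  have "degree (pderiv p) \<le> q - 1"
    unfolding p_def
    by (auto simp: degree_pderiv intro!: diff_le_mono degree_sum_le
        order.trans[OF degree_smult_le] degree_lagrange_poly)
  then have "pderiv p = 0"
    using poly_eq_0_if_orthogonal_lagrange[OF inj_r _ _ orth] by simp
  then obtain a where "p = [:a:]"
    by (auto simp: pderiv_eq_0_iff elim: degree_eq_zeroE)
  then have const: "poly p x = poly p y" for x y
    by simp
  show ?thesis
  proof (rule eq_vecI)
    fix k assume "k < dim_vec (0\<^sub>v q)"
    then have "v $ k = poly p (s (Suc k))"
      using poly_lagrange_combination_node[OF inj_s, of "Suc k" c] by (simp add: p_def c_def)
    also have "\<dots> = poly p (s 0)"
      by (rule const)
    also have "\<dots> = 0"
      using poly_lagrange_combination_node[OF inj_s, of 0 c] by (simp add: p_def c_def)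
    finally show "v $ k = 0\<^sub>v q $ k"
      using \<open>k < dim_vec (0\<^sub>v q)\<close> by simp
  qed (use v in simp)
qed

lemma invertible_mat_if_kernel_trivial:
  fixes A :: "'a::field mat"
  assumes A: "A \<in> carrier_mat n n"
    and kernel: "\<And>v. v \<in> carrier_vec n \<Longrightarrow> A *\<^sub>v v = 0\<^sub>v n \<Longrightarrow> v = 0\<^sub>v n"
  shows "invertible_mat A"
proof -
  have "det A \<noteq> 0"
    using det_0_iff_vec_prod_zero_field[OF A] kernel by blast
  from det_non_zero_imp_unit[OF A this, of "()"]
  obtain B where "B \<in> carrier_mat n n" "B * A = 1\<^sub>m n" "A * B = 1\<^sub>m n"
    by (auto simp: Units_def ring_mat_def)
  with A show ?thesis
    unfolding invertible_mat_def inverts_mat_def by auto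
qed

lemma left_inverse_times_row_sums:
  assumes A: "A \<in> carrier_mat n n" and B: "B \<in> carrier_mat n n"
    and BA: "B * A = 1\<^sub>m n" and "i < n"
  shows "(\<Sum>j<n. B $$ (i, j) * (\<Sum>k<n. A $$ (j, k))) = 1"
proof -
  have "(\<Sum>j<n. B $$ (i, j) * (\<Sum>k<n. A $$ (j, k))) = (\<Sum>j<n. \<Sum>k<n. B $$ (i, j) * A $$ (j, k))"
    by (simp add: sum_distrib_left)
  also have "\<dots> = (\<Sum>k<n. \<Sum>j<n. B $$ (i, j) * A $$ (j, k))"
    by (rule sum.swap)
  also have "\<dots> = (\<Sum>k<n. (B * A) $$ (i, k))"
    using A B \<open>i < n\<close> by (simp add: index_mult_mat scalar_prod_def lessThan_atLeast0)
  also have "\<dots> = 1"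
    using BA \<open>i < n\<close> by simp
  finally show ?thesis .
qed

theorem lemmaA1:
  fixes q :: nat and s r :: "nat \<Rightarrow> real"
  assumes q1: "q \<ge> 1"
    and s0: "s 0 = 0" and sq: "s q = 1"
    and s_mono: "\<And>i. i < q \<Longrightarrow> s i < s (Suc i)"
    and r_dist: "inj_on r {0..q-1}"
    and r_range: "\<And>i. i \<le> q - 1 \<Longrightarrow> r i \<in> {0..1}"
  shows "invertible_mat (mat_A s r q) \<and>
    (\<forall>Abar. Abar \<in> carrier_mat q q \<and> mat_A s r q * Abar = 1\<^sub>m q \<and> Abar * mat_A s r q = 1\<^sub>m q \<longrightarrow>
       (\<forall>m\<in>{1..q}. (\<Sum>n=1..q. Abar $$ (m - 1, n - 1) * coef_a s r q n 0) = -1))"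
proof (intro conjI allI impI ballI)
  have inj_s: "inj_on s {0..q}"
    using s_mono by (rule inj_on_if_Suc_less)
  have A: "mat_A s r q \<in> carrier_mat q q"
    by (simp add: mat_A_def)
  show "invertible_mat (mat_A s r q)"
    using invertible_mat_if_kernel_trivial[OF A] mat_A_kernel_trivial[OF inj_s r_dist q1] by blast
  fix Abar m
  assume Abar: "Abar \<in> carrier_mat q q \<and> mat_A s r q * Abar = 1\<^sub>m q \<and> Abar * mat_A s r q = 1\<^sub>m q"
    and m: "m \<in> {1..q}"
  have "(\<Sum>n=1..q. Abar $$ (m - 1, n - 1) * coef_a s r q n 0)
      = - (\<Sum>j<q. Abar $$ (m - 1, j) * (\<Sum>k<q. mat_A s r q $$ (j, k)))"
    by (simp add: sum.atLeast1_atMost_eq coef_a_first_column[OF inj_s] mat_A_entry sum_negf)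
  also have "\<dots> = -1"
    using left_inverse_times_row_sums[OF A, of Abar "m - 1"] Abar m by auto
  finally show "(\<Sum>n=1..q. Abar $$ (m - 1, n - 1) * coef_a s r q n 0) = -1" .
qed

end
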